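(* For every $f\in L^2(\pi)$, $\langle f,P_Nf\rangle_\pi\to(\mathbb{E}_\pi[f])^2$ as $N\to\infty$ (over integers $N$).
   Context: Let $\pi,q$ be probability densities with respect to a $\sigma$-finite measure $\mu$ on $(\mathbb{X},\mathcal{X})$ with $q(x)>0$ whenever $\pi(x)>0$; $\pi(dx)=\pi(x)\mu(dx)$, $q(dx)=q(x)\mu(dx)$, $\mathbb{S}=\{\pi>0\}$, $w(x)=\pi(x)/q(x)$ on $\mathbb{S}$ and $w=0$ elsewhere. For integer $N\ge1$, the i-SIR kernel is $P_N(z_1,A)=\int_{\mathbb{X}^{N-1}}\sum_{i=1}^N\frac{w(z_i)}{\sum_{j=1}^Nw(z_j)}\mathbf 1\{z_i\in A\}\prod_{n=2}^Nq(dz_n)$ for $z_1\in\mathbb{S}$, $P_1(z,\cdot)=\delta_z$, and $P_Nf(x)=\int f(y)P_N(x,dy)$. $\langle g,h\rangle_\pi=\int gh\,d\pi$. *)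

theory Defs
  imports "HOL-Probability.Probability"
begin

definition isir_weight :: "('a \<Rightarrow> real) \<Rightarrow> ('a \<Rightarrow> real) \<Rightarrow> 'a \<Rightarrow> real" where
  "isir_weight p q x = (if p x > 0 then p x / q x else 0)"

text \<open>The current state is z_1 = x (index 0 here),
  the N-1 fresh proposals z_2..z_N are i.i.d. with law q(dx) = q(x) mu(dx)
  (indices 1..N-1 here, i.e. y 0 .. y (N-2)).\<close>
definition isir_op :: "'a measure \<Rightarrow> ('a \<Rightarrow> real) \<Rightarrow> ('a \<Rightarrow> real) \<Rightarrow> nat \<Rightarrow> ('a \<Rightarrow> real) \<Rightarrow> 'a \<Rightarrow> real" where
  "isir_op M p q N f x =
    (if N = 1 then f x
     else \<integral>y. (\<Sum>i<N. isir_weight p q (case_nat x y i)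
                       / (\<Sum>j<N. isir_weight p q (case_nat x y j)) * f (case_nat x y i))
          \<partial>(\<Pi>\<^sub>M k\<in>{..<N - 1}. density M (\<lambda>z. ennreal (q z))))"

end

theory Submission
  imports Defs
begin

text \<open>
  Write \<open>\<pi> = w q\<close>. After this change of measure the current state of the chain is just one more
  proposal draw, weighted by \<open>w\<close>; so for \<open>N\<close> i.i.d. draws \<open>z\<^sub>1, \<dots>, z\<^sub>N\<close> from \<open>q\<close>, with
  \<open>S = \<Sum>\<^sub>i w(z\<^sub>i) f(z\<^sub>i)\<close> and \<open>W = \<Sum>\<^sub>i w(z\<^sub>i)\<close>, we get
  \<open>\<langle>f, P\<^sub>N f\<rangle>\<^sub>\<pi> = E[w(z\<^sub>1) f(z\<^sub>1) S / W] = E[S\<^sup>2 / W] / N\<close>, the second equality by exchangeability.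
  Splitting \<open>S = T + \<mu> W\<close> with \<open>\<mu> = E\<^sub>\<pi> f\<close> and \<open>T = \<Sum>\<^sub>i w(z\<^sub>i) (f(z\<^sub>i) - \<mu>)\<close> gives
  \<open>E[S\<^sup>2 / W] / N = \<mu>\<^sup>2 + E[T\<^sup>2 / (N W)]\<close>. By Cauchy-Schwarz, \<open>T\<^sup>2 / W \<le> V = \<Sum>\<^sub>i w(z\<^sub>i) (f(z\<^sub>i) - \<mu>)\<^sup>2\<close>,
  and by the weak law of large numbers in \<open>L\<^sup>1\<close> we have \<open>T/N \<rightarrow> 0\<close>, \<open>W/N \<rightarrow> 1\<close> and
  \<open>V/N \<rightarrow> Var\<^sub>\<pi> f\<close>. Hence \<open>T\<^sup>2 / (N W)\<close> is small where \<open>T/N \<approx> 0\<close> and \<open>W/N \<approx> 1\<close>, and is controlled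
  by \<open>V/N\<close> elsewhere, so the remainder \<open>E[T\<^sup>2 / (N W)]\<close> tends to \<open>0\<close>.
\<close>

definition nat_cons :: "nat \<Rightarrow> 'a \<times> (nat \<Rightarrow> 'a) \<Rightarrow> nat \<Rightarrow> 'a" where
  "nat_cons m = (\<lambda>(x, y). \<lambda>i\<in>{..<Suc m}. case_nat x y i)"

lemma nat_cons_apply: "i < Suc m \<Longrightarrow> nat_cons m (x, y) i = case_nat x y i"
  by (simp add: nat_cons_def)

lemma measurable_nat_cons:
  assumes "sets N = sets Q"
  shows "nat_cons m \<in> measurable (N \<Otimes>\<^sub>M (\<Pi>\<^sub>M i\<in>{..<m}. Q)) (\<Pi>\<^sub>M i\<in>{..<Suc m}. Q)"
  unfolding nat_cons_def split_beta'
proof (rule measurable_restrict)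
  fix i assume i: "i \<in> {..<Suc m}"
  show "(\<lambda>z. case_nat (fst z) (snd z) i) \<in> measurable (N \<Otimes>\<^sub>M (\<Pi>\<^sub>M i\<in>{..<m}. Q)) Q"
  proof (cases i)
    case 0
    then show ?thesis
      using measurable_compose[OF measurable_fst measurable_ident_sets[OF assms]] by simp
  next
    case (Suc j)
    with i show ?thesis by simp
  qed
qed

lemma distr_nat_cons_PiM:
  assumes "prob_space Q"
  shows "distr (Q \<Otimes>\<^sub>M (\<Pi>\<^sub>M i\<in>{..<m}. Q)) (\<Pi>\<^sub>M i\<in>{..<Suc m}. Q) (nat_cons m)
    = (\<Pi>\<^sub>M i\<in>{..<Suc m}. Q)"
proof -
  interpret product_sigma_finite "\<lambda>_. Q"
    by (simp add: product_sigma_finite_def assms prob_space_imp_sigma_finite)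
  interpret pair_sigma_finite Q "\<Pi>\<^sub>M i\<in>{..<m}. Q"
    by (simp add: pair_sigma_finite_def assms prob_space_imp_sigma_finite prob_space_PiM)
  show ?thesis
  proof (rule PiM_eqI)
    fix A assume A: "\<And>i. i \<in> {..<Suc m} \<Longrightarrow> A i \<in> sets Q"
    have "nat_cons m -` Pi\<^sub>E {..<Suc m} A \<inter> space (Q \<Otimes>\<^sub>M (\<Pi>\<^sub>M i\<in>{..<m}. Q))
        = A 0 \<times> (\<Pi>\<^sub>E j\<in>{..<m}. A (Suc j))"
      using A[THEN sets.sets_into_space]
      by (auto simp: nat_cons_def space_pair_measure space_PiM PiE_iff split: nat.splits)
        (metis lessThan_iff Suc_less_eq)
    then have "emeasure (distr (Q \<Otimes>\<^sub>M (\<Pi>\<^sub>M i\<in>{..<m}. Q)) (\<Pi>\<^sub>M i\<in>{..<Suc m}. Q) (nat_cons m))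
        (Pi\<^sub>E {..<Suc m} A) = emeasure Q (A 0) * emeasure (\<Pi>\<^sub>M i\<in>{..<m}. Q) (\<Pi>\<^sub>E j\<in>{..<m}. A (Suc j))"
      using A by (simp add: emeasure_distr measurable_nat_cons sets_PiM_I_finite M2.emeasure_pair_measure_Times)
    also have "\<dots> = (\<Prod>i<Suc m. emeasure Q (A i))"
      using A by (subst emeasure_PiM) (auto simp only: prod.lessThan_Suc_shift)
    finally show "emeasure (distr (Q \<Otimes>\<^sub>M (\<Pi>\<^sub>M i\<in>{..<m}. Q)) (\<Pi>\<^sub>M i\<in>{..<Suc m}. Q) (nat_cons m))
        (Pi\<^sub>E {..<Suc m} A) = (\<Prod>i<Suc m. emeasure Q (A i))" .
  qed simp_all
qed

lemma prob_space_density_normalized: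
  assumes "f \<in> borel_measurable M" and "(\<integral>\<^sup>+x. f x \<partial>M) = 1"
  shows "prob_space (density M f)"
proof
  have "emeasure (density M f) (space (density M f)) = (\<integral>\<^sup>+x. f x * indicator (space M) x \<partial>M)"
    using assms(1) by (simp add: emeasure_density)
  also have "\<dots> = (\<integral>\<^sup>+x. f x \<partial>M)"
    by (intro nn_integral_cong) simp
  finally have "emeasure (density M f) (space (density M f)) = (\<integral>\<^sup>+x. f x \<partial>M)" .
  then show "emeasure (density M f) (space (density M f)) = 1"
    using assms by simp
qed

lemma abs_le_add_square_div:
  fixes x \<eta> :: real
  assumes "\<eta> > 0"
  shows "\<bar>x\<bar> \<le> \<eta> + x\<^sup>2 / \<eta>"
proof (cases "\<bar>x\<bar> \<le> \<eta>")
  case True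
  moreover have "0 \<le> x\<^sup>2 / \<eta>"
    using assms by simp
  ultimately show ?thesis
    by linarith
next
  case False
  then have "\<bar>x\<bar> * \<eta> \<le> \<bar>x\<bar> * \<bar>x\<bar>"
    by (intro mult_left_mono) auto
  then have "\<bar>x\<bar> \<le> x\<^sup>2 / \<eta>"
    using assms by (simp add: power2_eq_square le_divide_eq)
  then show ?thesis
    using assms by linarith
qed

lemma tendsto_zero_by_approximation:
  fixes x :: "nat \<Rightarrow> real"
  assumes nonneg: "\<And>n. 0 \<le> x n"
    and approx: "\<And>e. e > 0 \<Longrightarrow> \<exists>y. y \<longlonglongrightarrow> 0 \<and> (\<forall>\<^sub>F n in sequentially. x n \<le> e + y n)"
  shows "x \<longlonglongrightarrow> 0"
proof (rule LIMSEQ_I)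
  fix e :: real assume "e > 0"
  then obtain y where "y \<longlonglongrightarrow> 0" and le: "\<forall>\<^sub>F n in sequentially. x n \<le> e / 2 + y n"
    using approx[of "e / 2"] by auto
  then have "\<forall>\<^sub>F n in sequentially. dist (y n) 0 < e / 2"
    using \<open>e > 0\<close> by (intro tendstoD) auto
  with le have "\<forall>\<^sub>F n in sequentially. norm (x n - 0) < e"
    by eventually_elim (use nonneg in \<open>auto simp: dist_real_def\<close>)
  then show "\<exists>n0. \<forall>n\<ge>n0. norm (x n - 0) < e"
    by (simp add: eventually_sequentially)
qed

lemma weighted_Cauchy_Schwarz:
  fixes a b :: "'i \<Rightarrow> real"
  assumes "\<And>i. i \<in> I \<Longrightarrow> a i \<ge> 0"
  shows "(\<Sum>i\<in>I. a i * b i)\<^sup>2 \<le> (\<Sum>i\<in>I. a i) * (\<Sum>i\<in>I. a i * (b i)\<^sup>2)"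
proof -
  have "(\<Sum>i\<in>I. a i * b i) = (\<Sum>i\<in>I. sqrt (a i) * (sqrt (a i) * b i))"
    using assms by (intro sum.cong refl) (simp flip: mult.assoc)
  also have "(\<dots>)\<^sup>2 \<le> (\<Sum>i\<in>I. (sqrt (a i))\<^sup>2) * (\<Sum>i\<in>I. (sqrt (a i) * b i)\<^sup>2)"
    by (rule Cauchy_Schwarz_ineq_sum)
  also have "\<dots> = (\<Sum>i\<in>I. a i) * (\<Sum>i\<in>I. a i * (b i)\<^sup>2)"
    using assms by (simp add: power_mult_distrib)
  finally show ?thesis .
qed

lemma weighted_Cauchy_Schwarz_div:
  fixes a b :: "'i \<Rightarrow> real"
  assumes "finite I" and "\<And>i. i \<in> I \<Longrightarrow> a i \<ge> 0"
  shows "(\<Sum>i\<in>I. a i * b i)\<^sup>2 / (\<Sum>i\<in>I. a i) \<le> (\<Sum>i\<in>I. a i * (b i)\<^sup>2)"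
proof (cases "(\<Sum>i\<in>I. a i) = 0")
  case False
  then have "(\<Sum>i\<in>I. a i) > 0"
    using assms sum_nonneg[of I a] by force
  then show ?thesis
    using weighted_Cauchy_Schwarz[of I a b] assms by (simp add: divide_le_eq mult.commute)
qed (use assms in \<open>simp add: sum_nonneg\<close>)

lemma abs_weighted_cross_term_le:
  fixes a b :: "'i \<Rightarrow> real"
  assumes "finite I" and nonneg: "\<And>i. i \<in> I \<Longrightarrow> a i \<ge> 0" and "k \<in> I"
  shows "\<bar>a k * b k * (\<Sum>i\<in>I. a i * b i) / (\<Sum>i\<in>I. a i)\<bar>
    \<le> a k * (b k)\<^sup>2 + (\<Sum>i\<in>I. a i * (b i)\<^sup>2)"
proof -
  define W where "W = (\<Sum>i\<in>I. a i)"
  define s where "s = (\<Sum>i\<in>I. a i * b i) / W"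
  have ak: "0 \<le> a k" "a k \<le> W"
    using assms unfolding W_def by (auto intro: member_le_sum)
  \<comment> \<open>\<open>2 \<bar>a b s\<bar> \<le> a b\<^sup>2 + a s\<^sup>2\<close> since \<open>a (\<bar>b\<bar> - \<bar>s\<bar>)\<^sup>2 \<ge> 0\<close>\<close>
  have "2 * \<bar>a k * b k * s\<bar> \<le> a k * (b k)\<^sup>2 + a k * s\<^sup>2"
  proof -
    have "0 \<le> a k * (\<bar>b k\<bar> - \<bar>s\<bar>)\<^sup>2"
      using ak by simp
    then show ?thesis
      using ak by (simp add: power2_eq_square algebra_simps abs_mult)
  qed
  moreover have "a k * s\<^sup>2 \<le> (\<Sum>i\<in>I. a i * (b i)\<^sup>2)"
  proof -
    have "a k * s\<^sup>2 \<le> W * s\<^sup>2"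
      using ak by (simp add: mult_right_mono)
    also have "\<dots> = (\<Sum>i\<in>I. a i * b i)\<^sup>2 / W"
      by (simp add: s_def power2_eq_square)
    also have "\<dots> \<le> (\<Sum>i\<in>I. a i * (b i)\<^sup>2)"
      unfolding W_def using assms(1,2) by (rule weighted_Cauchy_Schwarz_div)
    finally show ?thesis .
  qed
  moreover have "0 \<le> a k * (b k)\<^sup>2" "0 \<le> (\<Sum>i\<in>I. a i * (b i)\<^sup>2)"
    using nonneg ak by (auto intro: sum_nonneg)
  ultimately show ?thesis
    by (simp add: s_def W_def)
qed

text \<open>The right-hand side tends to \<open>2 \<delta>\<^sup>2\<close> as \<open>t \<rightarrow> 0\<close>, \<open>\<omega> \<rightarrow> 1\<close> and \<open>v \<rightarrow> c\<close>.\<close>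
lemma sq_div_le_deviation_bound:
  fixes t \<omega> v c \<delta> :: real
  assumes "\<delta> > 0" and "c \<ge> 0" and "\<omega> \<ge> 0" and le_v: "t\<^sup>2 / \<omega> \<le> v"
  shows "t\<^sup>2 / \<omega> \<le> 2 * \<delta>\<^sup>2 + \<bar>v - c\<bar> + c * (\<bar>t\<bar> / \<delta> + 2 * \<bar>\<omega> - 1\<bar>)"
proof (cases "\<bar>t\<bar> \<le> \<delta> \<and> \<bar>\<omega> - 1\<bar> < 1/2")
  case True
  then have "t\<^sup>2 \<le> \<delta>\<^sup>2" and "\<omega> > 1/2"
    using \<open>\<delta> > 0\<close> abs_le_square_iff[of t \<delta>] by arith+
  moreover have "\<delta>\<^sup>2 \<le> \<delta>\<^sup>2 * (2 * \<omega>)"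
    using \<open>\<omega> > 1/2\<close> by (simp add: mult_le_cancel_left1)
  ultimately have "t\<^sup>2 / \<omega> \<le> 2 * \<delta>\<^sup>2"
    by (simp add: divide_le_eq mult_ac)
  moreover have "0 \<le> c * (\<bar>t\<bar> / \<delta> + 2 * \<bar>\<omega> - 1\<bar>)"
    using assms by simp
  ultimately show ?thesis
    using abs_ge_zero[of "v - c"] by linarith
next
  case False
  then have "1 \<le> \<bar>t\<bar> / \<delta> \<or> 1 \<le> 2 * \<bar>\<omega> - 1\<bar>"
    using \<open>\<delta> > 0\<close> by (auto simp: le_divide_eq_1_pos)
  moreover have "0 \<le> \<bar>t\<bar> / \<delta>"
    using \<open>\<delta> > 0\<close> by simp
  ultimately have "1 \<le> \<bar>t\<bar> / \<delta> + 2 * \<bar>\<omega> - 1\<bar>"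
    by (smt (verit) abs_ge_zero)
  then have "c \<le> c * (\<bar>t\<bar> / \<delta> + 2 * \<bar>\<omega> - 1\<bar>)"
    using \<open>c \<ge> 0\<close> by (metis mult.right_neutral mult_left_mono)
  then show ?thesis
    using le_v by (smt (verit) zero_le_power2)
qed

section \<open>Independent copies and the weak law of large numbers\<close>

lemma integral_abs_truncation_tendsto_0:
  fixes h :: "'a \<Rightarrow> real"
  assumes "integrable M h"
  shows "(\<lambda>K::nat. \<integral>x. \<bar>h x - (if \<bar>h x\<bar> \<le> K then h x else 0)\<bar> \<partial>M) \<longlonglongrightarrow> 0"
proof -
  have [measurable]: "h \<in> borel_measurable M"
    using assms by simp
  have "(\<lambda>K::nat. \<integral>x. \<bar>h x - (if \<bar>h x\<bar> \<le> K then h x else 0)\<bar> \<partial>M) \<longlonglongrightarrow> (\<integral>x. 0 \<partial>M)"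
  proof (rule integral_dominated_convergence[where w="\<lambda>x. \<bar>h x\<bar>"])
    show "AE x in M. (\<lambda>K::nat. \<bar>h x - (if \<bar>h x\<bar> \<le> K then h x else 0)\<bar>) \<longlonglongrightarrow> 0"
    proof (intro AE_I2 tendsto_eventually)
      fix x
      have "\<forall>\<^sub>F K in sequentially. \<bar>h x\<bar> \<le> real K"
        by (rule eventually_sequentiallyI[of "nat \<lceil>\<bar>h x\<bar>\<rceil>"]) (simp add: nat_le_iff ceiling_le_iff)
      then show "\<forall>\<^sub>F K in sequentially. \<bar>h x - (if \<bar>h x\<bar> \<le> K then h x else 0)\<bar> = 0"
        by (rule eventually_mono) simp
    qed
  qed (use assms in auto)
  then show ?thesis
    by simp
qed

context prob_space
begin

abbreviation iid :: "nat \<Rightarrow> (nat \<Rightarrow> 'a) measure" where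
  "iid n \<equiv> \<Pi>\<^sub>M i\<in>{..<n}. M"

lemma prob_space_iid: "prob_space (iid n)"
  by (intro prob_space_PiM prob_space_axioms)

lemma iid_component_in_space: "z \<in> space (iid n) \<Longrightarrow> i < n \<Longrightarrow> z i \<in> space M"
  by (auto simp: space_PiM PiE_iff)

lemma measurable_iid_component:
  "i < n \<Longrightarrow> g \<in> borel_measurable M \<Longrightarrow> (\<lambda>z. g (z i)) \<in> borel_measurable (iid n)"
  by (intro measurable_PiM_component_rev) auto

lemma measurable_iid_sum [measurable]:
  fixes g :: "'a \<Rightarrow> real"
  assumes "g \<in> borel_measurable M"
  shows "(\<lambda>z. \<Sum>i<n. g (z i)) \<in> borel_measurable (iid n)"
proof (rule borel_measurable_sum)
  show "(\<lambda>z. g (z i)) \<in> borel_measurable (iid n)" if "i \<in> {..<n}" for i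
    using that assms by (intro measurable_iid_component) auto
qed

lemma
  fixes g :: "'a \<Rightarrow> real"
  assumes "i < n"
  shows integrable_iid_component: "integrable M g \<Longrightarrow> integrable (iid n) (\<lambda>z. g (z i))"
    and integral_iid_component:
      "g \<in> borel_measurable M \<Longrightarrow> (\<integral>z. g (z i) \<partial>iid n) = (\<integral>x. g x \<partial>M)"
proof -
  have distr: "distr (iid n) M (\<lambda>z. z i) = M"
    using assms by (intro distr_PiM_component prob_space_axioms) auto
  have [measurable]: "(\<lambda>z. z i) \<in> measurable (iid n) M"
    using assms by simp
  show "integrable M g \<Longrightarrow> integrable (iid n) (\<lambda>z. g (z i))"
    using integrable_distr_eq[of "\<lambda>z. z i" "iid n" M g] distr by auto
  show "g \<in> borel_measurable M \<Longrightarrow> (\<integral>z. g (z i) \<partial>iid n) = (\<integral>x. g x \<partial>M)"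
    using integral_distr[of "\<lambda>z. z i" "iid n" M g] distr by simp
qed

lemma
  fixes g :: "'a \<Rightarrow> real"
  assumes "integrable M g"
  shows integrable_iid_sum: "integrable (iid n) (\<lambda>z. \<Sum>i<n. g (z i))"
    and integral_iid_sum: "(\<integral>z. (\<Sum>i<n. g (z i)) \<partial>iid n) = n * (\<integral>x. g x \<partial>M)"
proof -
  show "integrable (iid n) (\<lambda>z. \<Sum>i<n. g (z i))"
    using assms by (intro Bochner_Integration.integrable_sum integrable_iid_component) auto
  have "(\<integral>z. (\<Sum>i<n. g (z i)) \<partial>iid n) = (\<Sum>i<n. (\<integral>z. g (z i) \<partial>iid n))"
    using assms by (intro Bochner_Integration.integral_sum integrable_iid_component) auto
  also have "\<dots> = (\<Sum>i<n. (\<integral>x. g x \<partial>M))"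
    using assms by (intro sum.cong refl integral_iid_component) auto
  finally show "(\<integral>z. (\<Sum>i<n. g (z i)) \<partial>iid n) = n * (\<integral>x. g x \<partial>M)"
    by simp
qed

lemma integral_iid_product_pair:
  fixes u :: "'a \<Rightarrow> real"
  assumes "i < n" "j < n" "i \<noteq> j" and "integrable M u"
  shows "(\<integral>z. u (z i) * u (z j) \<partial>iid n) = (\<integral>x. u x \<partial>M)\<^sup>2"
proof -
  interpret product_sigma_finite "\<lambda>_. M"
    by (simp add: product_sigma_finite_def prob_space_imp_sigma_finite prob_space_axioms)
  define v where "v k = (if k \<in> {i, j} then u else (\<lambda>_. 1))" for k
  have prod_ij: "(\<Prod>k<n. a k) = a i * a j" if "\<And>k. k \<notin> {i, j} \<Longrightarrow> a k = 1" for a :: "nat \<Rightarrow> real"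
    using assms that by (subst prod.mono_neutral_right[of "{..<n}" "{i, j}"]) auto
  have "(\<Prod>k<n. v k (z k)) = u (z i) * u (z j)" for z
    using prod_ij[of "\<lambda>k. v k (z k)"] by (auto simp: v_def)
  moreover have "(\<Prod>k<n. integral\<^sup>L M (v k)) = (\<integral>x. u x \<partial>M)\<^sup>2"
    using prod_ij[of "\<lambda>k. integral\<^sup>L M (v k)"] by (auto simp: v_def prob_space power2_eq_square)
  moreover have "(\<integral>z. (\<Prod>k<n. v k (z k)) \<partial>iid n) = (\<Prod>k<n. integral\<^sup>L M (v k))"
    using assms by (intro product_integral_prod) (auto simp: v_def prob_space)
  ultimately show ?thesis
    by simp
qed

lemma integrable_iid_product_bounded:
  fixes u :: "'a \<Rightarrow> real"
  assumes [measurable]: "u \<in> borel_measurable M"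
    and bounded: "\<And>x. x \<in> space M \<Longrightarrow> \<bar>u x\<bar> \<le> B" and "i < n" "j < n"
  shows "integrable (iid n) (\<lambda>z. u (z i) * u (z j))"
proof -
  interpret P: prob_space "iid n"
    by (rule prob_space_iid)
  show ?thesis
  proof (rule P.integrable_const_bound[where B="B * B"])
    show "AE z in iid n. norm (u (z i) * u (z j)) \<le> B * B"
    proof (rule AE_I2)
      fix z assume "z \<in> space (iid n)"
      then have "\<bar>u (z i)\<bar> \<le> B" "\<bar>u (z j)\<bar> \<le> B"
        using bounded iid_component_in_space assms(3,4) by auto
      then show "norm (u (z i) * u (z j)) \<le> B * B"
        unfolding real_norm_def abs_mult by (rule mult_mono') auto
    qed
    show "(\<lambda>z. u (z i) * u (z j)) \<in> borel_measurable (iid n)"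
      using assms(3,4) by (intro borel_measurable_times measurable_iid_component) auto
  qed
qed

lemma
  fixes u :: "'a \<Rightarrow> real"
  assumes [measurable]: "u \<in> borel_measurable M"
    and bounded: "\<And>x. x \<in> space M \<Longrightarrow> \<bar>u x\<bar> \<le> B" and centered: "(\<integral>x. u x \<partial>M) = 0"
  shows integrable_iid_sum_square: "integrable (iid n) (\<lambda>z. (\<Sum>i<n. u (z i))\<^sup>2)"
    and integral_iid_sum_square: "(\<integral>z. (\<Sum>i<n. u (z i))\<^sup>2 \<partial>iid n) = n * (\<integral>x. (u x)\<^sup>2 \<partial>M)"
proof -
  have square: "(\<Sum>i<n. u (z i))\<^sup>2 = (\<Sum>i<n. \<Sum>j<n. u (z i) * u (z j))" for z
    by (simp add: power2_eq_square sum_product)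
  have int_ij: "integrable (iid n) (\<lambda>z. u (z i) * u (z j))" if "i < n" "j < n" for i j
    using assms(1) bounded that by (rule integrable_iid_product_bounded)
  then show "integrable (iid n) (\<lambda>z. (\<Sum>i<n. u (z i))\<^sup>2)"
    unfolding square by (intro Bochner_Integration.integrable_sum) auto
  have u_integrable: "integrable M u"
    using bounded by (intro integrable_const_bound[where B=B]) auto
  have pair: "(\<integral>z. u (z i) * u (z j) \<partial>iid n) = (if i = j then (\<integral>x. (u x)\<^sup>2 \<partial>M) else 0)"
    if "i < n" "j < n" for i j
  proof (cases "i = j")
    case True
    then show ?thesis
      using that integral_iid_component[of i n "\<lambda>x. (u x)\<^sup>2"] by (simp add: power2_eq_square)
  next
    case False
    then show ?thesis
      using that integral_iid_product_pair[OF that False u_integrable] centered by simp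
  qed
  have "(\<integral>z. (\<Sum>i<n. u (z i))\<^sup>2 \<partial>iid n) = (\<Sum>i<n. \<integral>z. (\<Sum>j<n. u (z i) * u (z j)) \<partial>iid n)"
    unfolding square using int_ij
    by (intro Bochner_Integration.integral_sum[where f="\<lambda>i z. \<Sum>j<n. u (z i) * u (z j)"]
        Bochner_Integration.integrable_sum) auto
  also have "\<dots> = (\<Sum>i<n. \<Sum>j<n. \<integral>z. u (z i) * u (z j) \<partial>iid n)"
    using int_ij by (intro sum.cong refl Bochner_Integration.integral_sum) auto
  also have "\<dots> = (\<Sum>i<n. \<Sum>j<n. if i = j then (\<integral>x. (u x)\<^sup>2 \<partial>M) else 0)"
    by (intro sum.cong refl pair) auto
  finally show "(\<integral>z. (\<Sum>i<n. u (z i))\<^sup>2 \<partial>iid n) = n * (\<integral>x. (u x)\<^sup>2 \<partial>M)"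
    by simp
qed

lemma integral_iid_permute:
  fixes g :: "(nat \<Rightarrow> 'a) \<Rightarrow> real"
  assumes "bij_betw \<sigma> {..<n} {..<n}" and g: "g \<in> borel_measurable (iid n)"
  shows "(\<integral>z. g (\<lambda>i\<in>{..<n}. z (\<sigma> i)) \<partial>iid n) = (\<integral>z. g z \<partial>iid n)"
proof -
  have \<sigma>: "inj_on \<sigma> {..<n}" "\<sigma> \<in> {..<n} \<rightarrow> {..<n}"
    using assms(1) by (auto simp: bij_betw_def)
  have reindex_measurable: "(\<lambda>z. \<lambda>i\<in>{..<n}. z (\<sigma> i)) \<in> measurable (iid n) (iid n)"
    using \<sigma>(2) by (intro measurable_restrict measurable_component_singleton) auto
  have "distr (iid n) (iid n) (\<lambda>z. \<lambda>i\<in>{..<n}. z (\<sigma> i)) = iid n"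
    using distr_PiM_reindex[of "{..<n}" "\<lambda>_. M" \<sigma> "{..<n}"] \<sigma> prob_space_axioms by simp
  then show ?thesis
    using integral_distr[OF reindex_measurable g] by simp
qed

definition mean_deviation :: "('a \<Rightarrow> real) \<Rightarrow> nat \<Rightarrow> real" where
  "mean_deviation h n = (\<integral>z. \<bar>(\<Sum>i<n. h (z i)) / n - (\<integral>x. h x \<partial>M)\<bar> \<partial>iid n)"

lemma mean_deviation_nonneg: "0 \<le> mean_deviation h n"
  by (simp add: mean_deviation_def)

lemma integrable_iid_mean_deviation:
  fixes h :: "'a \<Rightarrow> real"
  assumes "integrable M h"
  shows "integrable (iid n) (\<lambda>z. \<bar>(\<Sum>i<n. h (z i)) / n - C\<bar>)"
proof -
  interpret P: prob_space "iid n"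
    by (rule prob_space_iid)
  show ?thesis
    using integrable_iid_sum[OF assms] by auto
qed

lemma mean_deviation_centered_bounded_le:
  fixes v :: "'a \<Rightarrow> real"
  assumes [measurable]: "v \<in> borel_measurable M"
    and bounded: "\<And>x. x \<in> space M \<Longrightarrow> \<bar>v x\<bar> \<le> B" and centered: "(\<integral>x. v x \<partial>M) = 0"
    and "\<eta> > 0" and "n > 0"
  shows "mean_deviation v n \<le> \<eta> + B\<^sup>2 / (n * \<eta>)"
proof -
  interpret P: prob_space "iid n"
    by (rule prob_space_iid)
  have v_integrable: "integrable M v"
    using bounded by (intro integrable_const_bound[where B=B]) auto
  have v_square_le: "(v x)\<^sup>2 \<le> B\<^sup>2" if "x \<in> space M" for x
    using power_mono[OF bounded[OF that], of 2] by simp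
  then have "(\<integral>x. (v x)\<^sup>2 \<partial>M) \<le> (\<integral>x. B\<^sup>2 \<partial>M)"
    by (intro integral_mono integrable_const_bound[where B="B\<^sup>2"]) (auto intro!: AE_I2)
  then have v_square: "(\<integral>x. (v x)\<^sup>2 \<partial>M) \<le> B\<^sup>2"
    by (simp add: prob_space)
  note sum_square = integrable_iid_sum_square[OF _ bounded centered] integral_iid_sum_square[OF _ bounded centered]
  have "mean_deviation v n \<le> (\<integral>z. \<eta> + (\<Sum>i<n. v (z i))\<^sup>2 / (n\<^sup>2 * \<eta>) \<partial>iid n)"
    unfolding mean_deviation_def centered
  proof (rule integral_mono)
    show "integrable (iid n) (\<lambda>z. \<bar>(\<Sum>i<n. v (z i)) / n - 0\<bar>)"
      by (rule integrable_iid_mean_deviation[OF v_integrable])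
    show "integrable (iid n) (\<lambda>z. \<eta> + (\<Sum>i<n. v (z i))\<^sup>2 / (n\<^sup>2 * \<eta>))"
      using sum_square by simp
    show "\<bar>(\<Sum>i<n. v (z i)) / n - 0\<bar> \<le> \<eta> + (\<Sum>i<n. v (z i))\<^sup>2 / (n\<^sup>2 * \<eta>)" for z
      using abs_le_add_square_div[OF \<open>\<eta> > 0\<close>, of "(\<Sum>i<n. v (z i)) / n"]
      by (simp add: power_divide)
  qed
  also have "\<dots> = \<eta> + n * (\<integral>x. (v x)\<^sup>2 \<partial>M) / (n\<^sup>2 * \<eta>)"
    using sum_square by (simp add: P.prob_space)
  also have "\<dots> \<le> \<eta> + B\<^sup>2 / (n * \<eta>)"
    using v_square \<open>n > 0\<close> \<open>\<eta> > 0\<close> by (simp add: power2_eq_square divide_right_mono)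
  finally show ?thesis .
qed

lemma mean_deviation_bounded_le:
  fixes u :: "'a \<Rightarrow> real"
  assumes [measurable]: "u \<in> borel_measurable M"
    and bounded: "\<And>x. x \<in> space M \<Longrightarrow> \<bar>u x\<bar> \<le> B" and "\<eta> > 0" and "n > 0"
  shows "mean_deviation u n \<le> \<eta> + 4 * B\<^sup>2 / (n * \<eta>)"
proof -
  have u_integrable: "integrable M u"
    using bounded by (intro integrable_const_bound[where B=B]) auto
  define v where "v x = u x - (\<integral>x. u x \<partial>M)" for x
  have [measurable]: "v \<in> borel_measurable M"
    unfolding v_def[abs_def] by measurable
  have "\<bar>\<integral>x. u x \<partial>M\<bar> \<le> (\<integral>x. \<bar>u x\<bar> \<partial>M)"
    by (rule integral_abs_bound)
  also have "\<dots> \<le> (\<integral>x. B \<partial>M)"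
    using u_integrable bounded by (intro integral_mono) auto
  finally have "\<bar>\<integral>x. u x \<partial>M\<bar> \<le> B"
    by (simp add: prob_space)
  then have v_bounded: "\<bar>v x\<bar> \<le> 2 * B" if "x \<in> space M" for x
    using bounded[OF that] by (simp add: v_def)
  have v_centered: "(\<integral>x. v x \<partial>M) = 0"
    using u_integrable by (simp add: v_def prob_space)
  have "mean_deviation u n = mean_deviation v n"
    unfolding mean_deviation_def v_centered
    using \<open>n > 0\<close> by (simp add: v_def sum_subtractf diff_divide_distrib)
  also have "\<dots> \<le> \<eta> + (2 * B)\<^sup>2 / (n * \<eta>)"
    using v_bounded v_centered \<open>\<eta> > 0\<close> \<open>n > 0\<close> by (intro mean_deviation_centered_bounded_le) auto
  finally show ?thesis
    by (simp add: power_mult_distrib)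
qed

lemma mean_deviation_le_approximation:
  fixes h k :: "'a \<Rightarrow> real"
  assumes "integrable M h" and "integrable M k"
  shows "mean_deviation h n \<le> mean_deviation k n + 2 * (\<integral>x. \<bar>h x - k x\<bar> \<partial>M)"
proof -
  interpret P: prob_space "iid n"
    by (rule prob_space_iid)
  let ?d = "\<lambda>x. \<bar>h x - k x\<bar>"
  have d_integrable: "integrable M ?d"
    using assms by simp
  have "\<bar>(\<integral>x. h x \<partial>M) - (\<integral>x. k x \<partial>M)\<bar> \<le> (\<integral>x. ?d x \<partial>M)"
    using assms by (simp flip: Bochner_Integration.integral_diff)
  then have pointwise: "\<bar>(\<Sum>i<n. h (z i)) / n - (\<integral>x. h x \<partial>M)\<bar>
      \<le> \<bar>(\<Sum>i<n. k (z i)) / n - (\<integral>x. k x \<partial>M)\<bar> + (\<Sum>i<n. ?d (z i)) / n + (\<integral>x. ?d x \<partial>M)" for z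
  proof -
    have "\<bar>(\<Sum>i<n. h (z i)) - (\<Sum>i<n. k (z i))\<bar> \<le> (\<Sum>i<n. ?d (z i))"
      by (simp flip: sum_subtractf)
    then have "\<bar>(\<Sum>i<n. h (z i)) / n - (\<Sum>i<n. k (z i)) / n\<bar> \<le> (\<Sum>i<n. ?d (z i)) / n"
      by (simp flip: diff_divide_distrib add: divide_right_mono)
    with \<open>\<bar>(\<integral>x. h x \<partial>M) - (\<integral>x. k x \<partial>M)\<bar> \<le> _\<close> show ?thesis
      by linarith
  qed
  have "mean_deviation h n \<le> (\<integral>z. \<bar>(\<Sum>i<n. k (z i)) / n - (\<integral>x. k x \<partial>M)\<bar>
      + (\<Sum>i<n. ?d (z i)) / n + (\<integral>x. ?d x \<partial>M) \<partial>iid n)"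
    unfolding mean_deviation_def
    using integrable_iid_mean_deviation[OF assms(1)] integrable_iid_mean_deviation[OF assms(2)]
      integrable_iid_sum[OF d_integrable]
    by (intro integral_mono pointwise) auto
  also have "\<dots> = mean_deviation k n + (\<integral>z. (\<Sum>i<n. ?d (z i)) \<partial>iid n) / n + (\<integral>x. ?d x \<partial>M)"
    unfolding mean_deviation_def
    using integrable_iid_mean_deviation[OF assms(2)] integrable_iid_sum[OF d_integrable]
    by (simp add: P.prob_space)
  also have "(\<integral>z. (\<Sum>i<n. ?d (z i)) \<partial>iid n) / n \<le> (\<integral>x. ?d x \<partial>M)"
    by (simp add: integral_iid_sum[OF d_integrable])
  finally show ?thesis
    by simp
qed

text \<open>The weak law of large numbers in \<open>L\<^sup>1\<close>: truncate \<open>h\<close> and apply the \<open>L\<^sup>2\<close> bound to the bounded part.\<close>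
theorem mean_deviation_tendsto_0:
  fixes h :: "'a \<Rightarrow> real"
  assumes "integrable M h"
  shows "mean_deviation h \<longlonglongrightarrow> 0"
proof (rule tendsto_zero_by_approximation)
  fix e :: real assume "e > 0"
  have [measurable]: "h \<in> borel_measurable M"
    using assms by simp
  define k where "k K x = (if \<bar>h x\<bar> \<le> real K then h x else 0)" for K :: nat and x
  obtain K where K: "(\<integral>x. \<bar>h x - k K x\<bar> \<partial>M) < e / 4"
    using LIMSEQ_D[OF integral_abs_truncation_tendsto_0[OF assms], of "e / 4"] \<open>e > 0\<close>
    by (force simp: k_def)
  have k_bounded: "\<bar>k K x\<bar> \<le> real K" for x
    by (simp add: k_def)
  have [measurable]: "k K \<in> borel_measurable M"
    by (simp add: k_def[abs_def])
  then have k_integrable: "integrable M (k K)"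
    using k_bounded by (intro integrable_const_bound[where B="real K"]) auto
  define y where "y n = 16 * (real K)\<^sup>2 / e / real n" for n :: nat
  show "\<exists>y. y \<longlonglongrightarrow> 0 \<and> (\<forall>\<^sub>F n in sequentially. mean_deviation h n \<le> e + y n)"
  proof (intro exI conjI)
    show "y \<longlonglongrightarrow> 0"
      unfolding y_def[abs_def] by (rule lim_const_over_n)
    show "\<forall>\<^sub>F n in sequentially. mean_deviation h n \<le> e + y n"
    proof (rule eventually_sequentiallyI[of 1])
      fix n :: nat assume "1 \<le> n"
      have "mean_deviation (k K) n \<le> e / 4 + 4 * (real K)\<^sup>2 / (n * (e / 4))"
        using \<open>1 \<le> n\<close> \<open>e > 0\<close> k_bounded by (intro mean_deviation_bounded_le) auto
      also have "4 * (real K)\<^sup>2 / (n * (e / 4)) = y n"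
        by (simp add: y_def field_simps)
      finally show "mean_deviation h n \<le> e + y n"
        using mean_deviation_le_approximation[OF assms k_integrable, of n] K \<open>e > 0\<close> by linarith
    qed
  qed
qed (rule mean_deviation_nonneg)

end

section \<open>The i-SIR kernel\<close>

locale isir =
  fixes M :: "'a measure" and p q :: "'a \<Rightarrow> real"
  assumes p_measurable [measurable]: "p \<in> borel_measurable M"
    and q_measurable [measurable]: "q \<in> borel_measurable M"
    and p_nonneg: "\<And>x. x \<in> space M \<Longrightarrow> p x \<ge> 0"
    and q_nonneg: "\<And>x. x \<in> space M \<Longrightarrow> q x \<ge> 0"
    and p_normalized: "(\<integral>\<^sup>+x. ennreal (p x) \<partial>M) = 1"
    and q_normalized: "(\<integral>\<^sup>+x. ennreal (q x) \<partial>M) = 1"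
    and q_pos_if_p_pos: "\<And>x. x \<in> space M \<Longrightarrow> p x > 0 \<Longrightarrow> q x > 0"
begin

abbreviation target :: "'a measure" where
  "target \<equiv> density M (\<lambda>x. ennreal (p x))"

abbreviation proposal :: "'a measure" where
  "proposal \<equiv> density M (\<lambda>x. ennreal (q x))"

abbreviation w :: "'a \<Rightarrow> real" where
  "w \<equiv> isir_weight p q"

lemma prob_space_target: "prob_space target"
  using p_normalized by (intro prob_space_density_normalized) auto

lemma prob_space_proposal: "prob_space proposal"
  using q_normalized by (intro prob_space_density_normalized) auto

lemma measurable_weight [measurable]: "w \<in> borel_measurable M"
  unfolding isir_weight_def[abs_def] by measurable

lemma weight_nonneg: "x \<in> space M \<Longrightarrow> w x \<ge> 0"
  unfolding isir_weight_def using p_nonneg q_nonneg by auto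

lemma p_eq_q_times_weight: "x \<in> space M \<Longrightarrow> p x = q x * w x"
  using p_nonneg q_pos_if_p_pos by (force simp: isir_weight_def)

lemma
  fixes g :: "'a \<Rightarrow> real"
  assumes [measurable]: "g \<in> borel_measurable M"
  shows integrable_target_iff: "integrable target g \<longleftrightarrow> integrable proposal (\<lambda>x. w x * g x)"
    and integral_target_eq: "(\<integral>x. g x \<partial>target) = (\<integral>x. w x * g x \<partial>proposal)"
proof -
  have "integrable target g \<longleftrightarrow> integrable M (\<lambda>x. p x * g x)"
    using p_nonneg by (subst integrable_density) auto
  also have "\<dots> \<longleftrightarrow> integrable M (\<lambda>x. q x * (w x * g x))"
    using p_eq_q_times_weight by (intro Bochner_Integration.integrable_cong) auto
  also have "\<dots> \<longleftrightarrow> integrable proposal (\<lambda>x. w x * g x)"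
    using q_nonneg by (subst integrable_density) auto
  finally show "integrable target g \<longleftrightarrow> integrable proposal (\<lambda>x. w x * g x)" .
  have "(\<integral>x. g x \<partial>target) = (\<integral>x. p x * g x \<partial>M)"
    using p_nonneg by (subst integral_density) auto
  also have "\<dots> = (\<integral>x. q x * (w x * g x) \<partial>M)"
    using p_eq_q_times_weight by (intro Bochner_Integration.integral_cong) auto
  also have "\<dots> = (\<integral>x. w x * g x \<partial>proposal)"
    using q_nonneg by (subst integral_density) auto
  finally show "(\<integral>x. g x \<partial>target) = (\<integral>x. w x * g x \<partial>proposal)" .
qed

end

sublocale isir \<subseteq> Q: prob_space proposal
  by (rule prob_space_proposal)

context isir
begin

lemma
  shows integrable_weight: "integrable proposal w"
    and integral_weight: "(\<integral>x. w x \<partial>proposal) = 1"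
proof -
  interpret P: prob_space target
    by (rule prob_space_target)
  show "integrable proposal w"
    using integrable_target_iff[of "\<lambda>_. 1"] by simp
  show "(\<integral>x. w x \<partial>proposal) = 1"
    using integral_target_eq[of "\<lambda>_. 1"] P.prob_space by simp
qed

definition weighted_sum :: "nat \<Rightarrow> ('a \<Rightarrow> real) \<Rightarrow> (nat \<Rightarrow> 'a) \<Rightarrow> real" where
  "weighted_sum n h z = (\<Sum>i<n. w (z i) * h (z i))"

abbreviation total_weight :: "nat \<Rightarrow> (nat \<Rightarrow> 'a) \<Rightarrow> real" where
  "total_weight n \<equiv> weighted_sum n (\<lambda>_. 1)"

definition cross_term :: "nat \<Rightarrow> nat \<Rightarrow> ('a \<Rightarrow> real) \<Rightarrow> (nat \<Rightarrow> 'a) \<Rightarrow> real" where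
  "cross_term n j h z = w (z j) * h (z j) * weighted_sum n h z / total_weight n z"

lemma measurable_weighted_sum [measurable]:
  "h \<in> borel_measurable M \<Longrightarrow> weighted_sum n h \<in> borel_measurable (Q.iid n)"
  unfolding weighted_sum_def[abs_def] by (rule Q.measurable_iid_sum) measurable

lemma total_weight_nonneg: "z \<in> space (Q.iid n) \<Longrightarrow> total_weight n z \<ge> 0"
  unfolding weighted_sum_def using weight_nonneg Q.iid_component_in_space by (auto intro: sum_nonneg)

lemma
  fixes h :: "'a \<Rightarrow> real"
  assumes "integrable proposal (\<lambda>x. w x * h x)"
  shows integrable_weighted_sum: "integrable (Q.iid n) (weighted_sum n h)"
    and integral_weighted_sum: "(\<integral>z. weighted_sum n h z \<partial>Q.iid n) = n * (\<integral>x. w x * h x \<partial>proposal)"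
  unfolding weighted_sum_def[abs_def]
  using Q.integrable_iid_sum[OF assms] Q.integral_iid_sum[OF assms] by auto

lemma sq_div_total_weight_le:
  "z \<in> space (Q.iid n) \<Longrightarrow> (weighted_sum n h z)\<^sup>2 / total_weight n z \<le> weighted_sum n (\<lambda>x. (h x)\<^sup>2) z"
  unfolding weighted_sum_def using weight_nonneg Q.iid_component_in_space
  by (auto intro: weighted_Cauchy_Schwarz_div)

lemma integrable_sq_div_total_weight:
  assumes [measurable]: "h \<in> borel_measurable M" and "integrable proposal (\<lambda>x. w x * (h x)\<^sup>2)"
  shows "integrable (Q.iid n) (\<lambda>z. (weighted_sum n h z)\<^sup>2 / total_weight n z)"
proof (rule Bochner_Integration.integrable_bound)
  show "integrable (Q.iid n) (weighted_sum n (\<lambda>x. (h x)\<^sup>2))"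
    using assms(2) by (rule integrable_weighted_sum)
  show "AE z in Q.iid n. norm ((weighted_sum n h z)\<^sup>2 / total_weight n z)
      \<le> norm (weighted_sum n (\<lambda>x. (h x)\<^sup>2) z)"
    using sq_div_total_weight_le total_weight_nonneg
    by (intro AE_I2) (auto intro: order_trans[OF _ abs_ge_self])
qed measurable

lemma abs_cross_term_le:
  assumes "z \<in> space (Q.iid n)" and "j < n"
  shows "\<bar>cross_term n j h z\<bar> \<le> w (z j) * (h (z j))\<^sup>2 + weighted_sum n (\<lambda>x. (h x)\<^sup>2) z"
  unfolding cross_term_def weighted_sum_def
  using abs_weighted_cross_term_le[of "{..<n}" "\<lambda>i. w (z i)" j "\<lambda>i. h (z i)"] assms
    weight_nonneg Q.iid_component_in_space
  by auto

lemma integrable_cross_term: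
  assumes [measurable]: "h \<in> borel_measurable M"
    and h2: "integrable proposal (\<lambda>x. w x * (h x)\<^sup>2)" and "j < n"
  shows "integrable (Q.iid n) (cross_term n j h)"
proof (rule Bochner_Integration.integrable_bound)
  show "integrable (Q.iid n) (\<lambda>z. w (z j) * (h (z j))\<^sup>2 + weighted_sum n (\<lambda>x. (h x)\<^sup>2) z)"
    using Q.integrable_iid_component[OF \<open>j < n\<close> h2] integrable_weighted_sum[OF h2] by simp
  show "cross_term n j h \<in> borel_measurable (Q.iid n)"
    unfolding cross_term_def[abs_def]
    using \<open>j < n\<close> by (intro borel_measurable_divide borel_measurable_times Q.measurable_iid_component) auto
  show "AE z in Q.iid n. norm (cross_term n j h z)
      \<le> norm (w (z j) * (h (z j))\<^sup>2 + weighted_sum n (\<lambda>x. (h x)\<^sup>2) z)"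
    using abs_cross_term_le \<open>j < n\<close> by (intro AE_I2) (auto intro: order_trans[OF _ abs_ge_self])
qed

lemma weighted_sum_permute:
  assumes "bij_betw \<sigma> {..<n} {..<n}"
  shows "weighted_sum n h (\<lambda>i\<in>{..<n}. z (\<sigma> i)) = weighted_sum n h z"
proof -
  have "weighted_sum n h (\<lambda>i\<in>{..<n}. z (\<sigma> i)) = (\<Sum>i<n. w (z (\<sigma> i)) * h (z (\<sigma> i)))"
    unfolding weighted_sum_def by (intro sum.cong) auto
  also have "\<dots> = weighted_sum n h z"
    unfolding weighted_sum_def using assms by (rule sum.reindex_bij_betw)
  finally show ?thesis .
qed

lemma integral_cross_term_eq_first:
  assumes [measurable]: "h \<in> borel_measurable M" and "j < n"
  shows "(\<integral>z. cross_term n j h z \<partial>Q.iid n) = (\<integral>z. cross_term n 0 h z \<partial>Q.iid n)"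
proof -
  let ?\<sigma> = "Transposition.transpose 0 j"
  have bij: "bij_betw ?\<sigma> {..<n} {..<n}"
    using \<open>j < n\<close> by simp
  have "cross_term n 0 h (\<lambda>i\<in>{..<n}. z (?\<sigma> i)) = cross_term n j h z" for z
    using \<open>j < n\<close> by (simp add: cross_term_def weighted_sum_permute[OF bij])
  then have "(\<integral>z. cross_term n j h z \<partial>Q.iid n) = (\<integral>z. cross_term n 0 h (\<lambda>i\<in>{..<n}. z (?\<sigma> i)) \<partial>Q.iid n)"
    by simp
  also have "\<dots> = (\<integral>z. cross_term n 0 h z \<partial>Q.iid n)"
    using \<open>j < n\<close> by (intro Q.integral_iid_permute bij) (simp add: cross_term_def[abs_def])
  finally show ?thesis .
qed

lemma sum_cross_term: "(\<Sum>j<n. cross_term n j h z) = (weighted_sum n h z)\<^sup>2 / total_weight n z"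
  by (simp add: cross_term_def weighted_sum_def[of n h] power2_eq_square
      flip: sum_divide_distrib sum_distrib_right)

lemma integral_sq_div_total_weight_eq:
  assumes [measurable]: "h \<in> borel_measurable M" and h2: "integrable proposal (\<lambda>x. w x * (h x)\<^sup>2)"
  shows "(\<integral>z. (weighted_sum n h z)\<^sup>2 / total_weight n z \<partial>Q.iid n)
    = n * (\<integral>z. cross_term n 0 h z \<partial>Q.iid n)"
proof -
  have "(\<integral>z. (weighted_sum n h z)\<^sup>2 / total_weight n z \<partial>Q.iid n)
      = (\<Sum>j<n. \<integral>z. cross_term n j h z \<partial>Q.iid n)"
    using integrable_cross_term[OF _ h2] by (simp flip: sum_cross_term)
  also have "\<dots> = (\<Sum>j<n. \<integral>z. cross_term n 0 h z \<partial>Q.iid n)"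
    by (intro sum.cong refl integral_cross_term_eq_first) auto
  finally show ?thesis
    by simp
qed

lemma isir_op_eq_integral:
  assumes "m \<ge> 1"
  shows "isir_op M p q (Suc m) h x
    = (\<integral>y. weighted_sum (Suc m) h (nat_cons m (x, y)) / total_weight (Suc m) (nat_cons m (x, y)) \<partial>Q.iid m)"
proof -
  have "(\<Sum>i<Suc m. w (case_nat x y i) / (\<Sum>j<Suc m. w (case_nat x y j)) * h (case_nat x y i))
      = weighted_sum (Suc m) h (nat_cons m (x, y)) / total_weight (Suc m) (nat_cons m (x, y))" for y
    by (simp add: weighted_sum_def nat_cons_apply sum_divide_distrib del: sum.lessThan_Suc)
  then show ?thesis
    using assms by (simp add: isir_op_def)
qed

lemma measurable_isir_op:
  assumes "m \<ge> 1" and [measurable]: "h \<in> borel_measurable M"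
  shows "isir_op M p q (Suc m) h \<in> borel_measurable M"
proof -
  interpret Qm: prob_space "Q.iid m"
    by (rule Q.prob_space_iid)
  have "sets M = sets proposal"
    by simp
  then have [measurable]: "nat_cons m \<in> measurable (M \<Otimes>\<^sub>M Q.iid m) (Q.iid (Suc m))"
    by (rule measurable_nat_cons)
  have "(\<lambda>(x, y). weighted_sum (Suc m) h (nat_cons m (x, y)) / total_weight (Suc m) (nat_cons m (x, y)))
      \<in> borel_measurable (M \<Otimes>\<^sub>M Q.iid m)"
    by measurable
  then show ?thesis
    unfolding isir_op_eq_integral[OF assms(1), abs_def]
    by (rule Qm.borel_measurable_lebesgue_integral)
qed

lemma inner_isir_op_eq_integral_cross_term:
  assumes "m \<ge> 1" and [measurable]: "h \<in> borel_measurable M"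
    and h2: "integrable proposal (\<lambda>x. w x * (h x)\<^sup>2)"
  shows "(\<integral>x. h x * isir_op M p q (Suc m) h x \<partial>target) = (\<integral>z. cross_term (Suc m) 0 h z \<partial>Q.iid (Suc m))"
proof -
  interpret pair_sigma_finite proposal "Q.iid m"
    by (simp add: pair_sigma_finite_def prob_space_imp_sigma_finite prob_space_proposal Q.prob_space_iid)
  have [measurable]: "isir_op M p q (Suc m) h \<in> borel_measurable M"
    using assms(1,2) by (rule measurable_isir_op)
  have cons_measurable [measurable]: "nat_cons m \<in> measurable (proposal \<Otimes>\<^sub>M Q.iid m) (Q.iid (Suc m))"
    by (rule measurable_nat_cons) simp
  have cons_distr: "distr (proposal \<Otimes>\<^sub>M Q.iid m) (Q.iid (Suc m)) (nat_cons m) = Q.iid (Suc m)"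
    by (rule distr_nat_cons_PiM[OF prob_space_proposal])
  have [measurable]: "cross_term (Suc m) 0 h \<in> borel_measurable (Q.iid (Suc m))"
    by (simp add: cross_term_def[abs_def] Q.measurable_iid_component)
  have integrable: "integrable (proposal \<Otimes>\<^sub>M Q.iid m) (\<lambda>xy. cross_term (Suc m) 0 h (nat_cons m xy))"
    using integrable_cross_term[OF _ h2, of 0 "Suc m"] cons_distr
    by (simp flip: integrable_distr_eq[OF cons_measurable])
  have "(\<integral>x. h x * isir_op M p q (Suc m) h x \<partial>target)
      = (\<integral>x. w x * (h x * isir_op M p q (Suc m) h x) \<partial>proposal)"
    by (rule integral_target_eq) measurable
  also have "\<dots> = (\<integral>x. (\<integral>y. cross_term (Suc m) 0 h (nat_cons m (x, y)) \<partial>Q.iid m) \<partial>proposal)"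
    using assms(1)
    by (simp add: isir_op_eq_integral cross_term_def nat_cons_apply mult.assoc flip: integral_mult_right_zero)
  also have "\<dots> = (\<integral>xy. cross_term (Suc m) 0 h (nat_cons m xy) \<partial>(proposal \<Otimes>\<^sub>M Q.iid m))"
    using integral_fst'[OF integrable] by simp
  also have "\<dots> = (\<integral>z. cross_term (Suc m) 0 h z \<partial>Q.iid (Suc m))"
    by (simp add: integral_distr[OF cons_measurable, symmetric] cons_distr)
  finally show ?thesis .
qed

end

section \<open>Convergence of \<open>\<langle>f, P\<^sub>N f\<rangle>\<^sub>\<pi>\<close>\<close>

locale isir_square_integrable = isir +
  fixes f :: "'a \<Rightarrow> real"
  assumes f_measurable [measurable]: "f \<in> borel_measurable M"
    and f_square_integrable: "integrable target (\<lambda>x. (f x)\<^sup>2)"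
begin

definition mean :: real where
  "mean = (\<integral>x. f x \<partial>target)"

definition centered :: "'a \<Rightarrow> real" where
  "centered x = f x - mean"

definition variance :: real where
  "variance = (\<integral>x. (centered x)\<^sup>2 \<partial>target)"

definition excess :: "nat \<Rightarrow> real" where
  "excess n = (\<integral>z. (weighted_sum n centered z)\<^sup>2 / (n * total_weight n z) \<partial>Q.iid n)"

lemma measurable_centered [measurable]: "centered \<in> borel_measurable M"
  unfolding centered_def[abs_def] by measurable

lemma variance_nonneg: "variance \<ge> 0"
  by (simp add: variance_def)

lemma
  shows integrable_weight_f: "integrable proposal (\<lambda>x. w x * f x)"
    and integral_weight_f: "(\<integral>x. w x * f x \<partial>proposal) = mean"
    and integrable_weight_f_square: "integrable proposal (\<lambda>x. w x * (f x)\<^sup>2)"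
    and integrable_weight_centered: "integrable proposal (\<lambda>x. w x * centered x)"
    and integral_weight_centered: "(\<integral>x. w x * centered x \<partial>proposal) = 0"
    and integrable_weight_centered_square: "integrable proposal (\<lambda>x. w x * (centered x)\<^sup>2)"
    and integral_weight_centered_square: "(\<integral>x. w x * (centered x)\<^sup>2 \<partial>proposal) = variance"
proof -
  interpret P: prob_space target
    by (rule prob_space_target)
  have f: "integrable target f"
    using P.square_integrable_imp_integrable[OF _ f_square_integrable] by simp
  then have centered: "integrable target centered"
    unfolding centered_def[abs_def] by simp
  have "(\<lambda>x. (centered x)\<^sup>2) = (\<lambda>x. (f x)\<^sup>2 - 2 * mean * f x + mean\<^sup>2)"
    by (auto simp: centered_def power2_eq_square algebra_simps)
  then have centered_square: "integrable target (\<lambda>x. (centered x)\<^sup>2)"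
    using f f_square_integrable by simp
  show "integrable proposal (\<lambda>x. w x * f x)" "(\<integral>x. w x * f x \<partial>proposal) = mean"
    "integrable proposal (\<lambda>x. w x * (f x)\<^sup>2)"
    using f f_square_integrable by (simp_all add: integrable_target_iff mean_def flip: integral_target_eq)
  have "(\<integral>x. centered x \<partial>target) = 0"
    using f P.prob_space by (simp add: centered_def[abs_def] mean_def)
  then show "integrable proposal (\<lambda>x. w x * centered x)" "(\<integral>x. w x * centered x \<partial>proposal) = 0"
    using centered by (simp_all add: integrable_target_iff flip: integral_target_eq)
  show "integrable proposal (\<lambda>x. w x * (centered x)\<^sup>2)"
    "(\<integral>x. w x * (centered x)\<^sup>2 \<partial>proposal) = variance"
    using centered_square by (simp_all add: integrable_target_iff variance_def flip: integral_target_eq)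
qed

lemma sq_div_total_weight_decomposition:
  assumes "z \<in> space (Q.iid n)"
  shows "(weighted_sum n f z)\<^sup>2 / total_weight n z
    = (weighted_sum n centered z)\<^sup>2 / total_weight n z + 2 * mean * weighted_sum n f z
      - mean\<^sup>2 * total_weight n z"
proof -
  have centered_sum: "weighted_sum n centered z = weighted_sum n f z - mean * total_weight n z"
    by (simp add: weighted_sum_def centered_def algebra_simps sum_subtractf sum_distrib_left)
  show ?thesis
  proof (cases "total_weight n z = 0")
    case True
    then have "\<forall>i\<in>{..<n}. w (z i) = 0"
      using weight_nonneg Q.iid_component_in_space[OF assms] unfolding weighted_sum_def
      by (subst (asm) sum_nonneg_eq_0_iff) auto
    then show ?thesis
      using True by (simp add: centered_sum weighted_sum_def)
  next
    case False
    then show ?thesis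
      by (simp add: centered_sum field_simps power2_eq_square)
  qed
qed

lemma integral_sq_div_total_weight_div_eq:
  assumes "n \<ge> 1"
  shows "(\<integral>z. (weighted_sum n f z)\<^sup>2 / total_weight n z \<partial>Q.iid n) / n = mean\<^sup>2 + excess n"
proof -
  have "(\<integral>z. (weighted_sum n f z)\<^sup>2 / total_weight n z \<partial>Q.iid n)
      = (\<integral>z. (weighted_sum n centered z)\<^sup>2 / total_weight n z \<partial>Q.iid n)
        + 2 * mean * (\<integral>z. weighted_sum n f z \<partial>Q.iid n) - mean\<^sup>2 * (\<integral>z. total_weight n z \<partial>Q.iid n)"
    using integrable_sq_div_total_weight[OF _ integrable_weight_centered_square]
      integrable_weighted_sum[OF integrable_weight_f]
      integrable_weighted_sum[of "\<lambda>_. 1"] integrable_weight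
    by (simp add: sq_div_total_weight_decomposition cong: Bochner_Integration.integral_cong)
  also have "\<dots> = (\<integral>z. (weighted_sum n centered z)\<^sup>2 / total_weight n z \<partial>Q.iid n) + n * mean\<^sup>2"
    using integral_weighted_sum[OF integrable_weight_f] integral_weight_f
      integral_weighted_sum[of "\<lambda>_. 1"] integrable_weight integral_weight
    by (simp add: power2_eq_square)
  finally have "(\<integral>z. (weighted_sum n f z)\<^sup>2 / total_weight n z \<partial>Q.iid n)
      = (\<integral>z. (weighted_sum n centered z)\<^sup>2 / total_weight n z \<partial>Q.iid n) + n * mean\<^sup>2" .
  moreover have "excess n = (\<integral>z. (weighted_sum n centered z)\<^sup>2 / total_weight n z \<partial>Q.iid n) / n"
    unfolding excess_def
    by (simp add: divide_divide_eq_left mult.commute flip: integral_divide_zero)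
  ultimately show ?thesis
    using assms by (simp add: field_simps)
qed

lemma excess_nonneg: "excess n \<ge> 0"
  unfolding excess_def using total_weight_nonneg by (intro integral_nonneg_AE AE_I2) auto

lemma excess_integrand_le:
  assumes "z \<in> space (Q.iid n)" and "n \<ge> 1" and "\<delta> > 0"
  shows "(weighted_sum n centered z)\<^sup>2 / (n * total_weight n z)
    \<le> 2 * \<delta>\<^sup>2 + \<bar>weighted_sum n (\<lambda>x. (centered x)\<^sup>2) z / n - variance\<bar>
      + variance / \<delta> * \<bar>weighted_sum n centered z / n\<bar> + 2 * variance * \<bar>total_weight n z / n - 1\<bar>"
proof -
  have scale: "(weighted_sum n centered z)\<^sup>2 / (n * total_weight n z)
      = (weighted_sum n centered z / n)\<^sup>2 / (total_weight n z / n)"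
    using \<open>n \<ge> 1\<close> by (cases "total_weight n z = 0") (simp_all add: field_simps power2_eq_square)
  have "(weighted_sum n centered z)\<^sup>2 / (n * total_weight n z)
      \<le> weighted_sum n (\<lambda>x. (centered x)\<^sup>2) z / n"
    using divide_right_mono[OF sq_div_total_weight_le[OF assms(1)], of n]
    by (simp add: divide_divide_eq_left mult.commute)
  then have "(weighted_sum n centered z / n)\<^sup>2 / (total_weight n z / n)
      \<le> 2 * \<delta>\<^sup>2 + \<bar>weighted_sum n (\<lambda>x. (centered x)\<^sup>2) z / n - variance\<bar>
        + variance * (\<bar>weighted_sum n centered z / n\<bar> / \<delta> + 2 * \<bar>total_weight n z / n - 1\<bar>)"
    unfolding scale using \<open>\<delta> > 0\<close> variance_nonneg total_weight_nonneg[OF assms(1)]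
    by (intro sq_div_le_deviation_bound) auto
  then show ?thesis
    unfolding scale by (simp add: algebra_simps)
qed

lemma excess_le:
  assumes "n \<ge> 1" and "\<delta> > 0"
  shows "excess n \<le> 2 * \<delta>\<^sup>2 + Q.mean_deviation (\<lambda>x. w x * (centered x)\<^sup>2) n
    + variance / \<delta> * Q.mean_deviation (\<lambda>x. w x * centered x) n + 2 * variance * Q.mean_deviation w n"
proof -
  interpret Qn: prob_space "Q.iid n"
    by (rule Q.prob_space_iid)
  define dev where "dev h C z = \<bar>(\<Sum>i<n. h (z i)) / n - C\<bar>" for h C and z :: "nat \<Rightarrow> 'a"
  have dev_integrable: "integrable (Q.iid n) (dev h C)" if "integrable proposal h" for h C
    unfolding dev_def[abs_def] using that by (rule Q.integrable_iid_mean_deviation)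
  have dev_mean_deviation: "(\<integral>z. dev h (\<integral>x. h x \<partial>proposal) z \<partial>Q.iid n) = Q.mean_deviation h n" for h
    by (simp add: dev_def Q.mean_deviation_def)
  have pointwise: "(weighted_sum n centered z)\<^sup>2 / (n * total_weight n z)
      \<le> 2 * \<delta>\<^sup>2 + dev (\<lambda>x. w x * (centered x)\<^sup>2) variance z
        + variance / \<delta> * dev (\<lambda>x. w x * centered x) 0 z + 2 * variance * dev w 1 z"
    if "z \<in> space (Q.iid n)" for z
    using excess_integrand_le[OF that assms] by (simp add: dev_def weighted_sum_def)
  have "integrable (Q.iid n) (\<lambda>z. (weighted_sum n centered z)\<^sup>2 / total_weight n z / n)"
    using integrable_sq_div_total_weight[OF measurable_centered integrable_weight_centered_square] by (rule integrable_divide)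
  then have excess_integrable:
    "integrable (Q.iid n) (\<lambda>z. (weighted_sum n centered z)\<^sup>2 / (n * total_weight n z))"
    by (simp add: divide_divide_eq_left mult.commute)
  have "excess n \<le> (\<integral>z. 2 * \<delta>\<^sup>2 + dev (\<lambda>x. w x * (centered x)\<^sup>2) variance z
      + variance / \<delta> * dev (\<lambda>x. w x * centered x) 0 z + 2 * variance * dev w 1 z \<partial>Q.iid n)"
    unfolding excess_def
    using pointwise dev_integrable integrable_weight_centered integrable_weight_centered_square
      integrable_weight excess_integrable
    by (intro integral_mono) auto
  also have "\<dots> = 2 * \<delta>\<^sup>2 + Q.mean_deviation (\<lambda>x. w x * (centered x)\<^sup>2) n
      + variance / \<delta> * Q.mean_deviation (\<lambda>x. w x * centered x) n + 2 * variance * Q.mean_deviation w n"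
    using dev_integrable[OF integrable_weight_centered_square] dev_integrable[OF integrable_weight_centered]
      dev_integrable[OF integrable_weight]
      dev_mean_deviation[of "\<lambda>x. w x * (centered x)\<^sup>2"] dev_mean_deviation[of "\<lambda>x. w x * centered x"]
      dev_mean_deviation[of w]
    by (simp add: integral_weight_centered integral_weight_centered_square integral_weight Qn.prob_space)
  finally show ?thesis .
qed

lemma excess_tendsto_0: "excess \<longlonglongrightarrow> 0"
proof (rule tendsto_zero_by_approximation)
  fix e :: real assume "e > 0"
  define \<delta> where "\<delta> = sqrt (e / 2)"
  have "\<delta> > 0" and e: "e = 2 * \<delta>\<^sup>2"
    using \<open>e > 0\<close> by (simp_all add: \<delta>_def)
  have "(\<lambda>n. Q.mean_deviation (\<lambda>x. w x * (centered x)\<^sup>2) n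
      + variance / \<delta> * Q.mean_deviation (\<lambda>x. w x * centered x) n + 2 * variance * Q.mean_deviation w n)
      \<longlonglongrightarrow> 0 + variance / \<delta> * 0 + 2 * variance * 0"
    using integrable_weight integrable_weight_centered integrable_weight_centered_square
    by (intro tendsto_intros Q.mean_deviation_tendsto_0)
  moreover have "\<forall>\<^sub>F n in sequentially. excess n \<le> e + (Q.mean_deviation (\<lambda>x. w x * (centered x)\<^sup>2) n
      + variance / \<delta> * Q.mean_deviation (\<lambda>x. w x * centered x) n + 2 * variance * Q.mean_deviation w n)"
    using excess_le[OF _ \<open>\<delta> > 0\<close>] unfolding e by (intro eventually_sequentiallyI[of 1]) fastforce
  ultimately show "\<exists>y. y \<longlonglongrightarrow> 0 \<and> (\<forall>\<^sub>F n in sequentially. excess n \<le> e + y n)"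
    by auto
qed (rule excess_nonneg)

lemma inner_isir_op_eq:
  assumes "N \<ge> 2"
  shows "(\<integral>x. f x * isir_op M p q N f x \<partial>target) = mean\<^sup>2 + excess N"
proof -
  obtain m where m: "N = Suc m" "m \<ge> 1"
    using assms by (cases N) auto
  have "(\<integral>x. f x * isir_op M p q N f x \<partial>target) = (\<integral>z. cross_term N 0 f z \<partial>Q.iid N)"
    unfolding m(1) using m(2) f_measurable integrable_weight_f_square
    by (rule inner_isir_op_eq_integral_cross_term)
  also have "\<dots> = (\<integral>z. (weighted_sum N f z)\<^sup>2 / total_weight N z \<partial>Q.iid N) / N"
    using integral_sq_div_total_weight_eq[OF f_measurable integrable_weight_f_square, of N] assms by simp
  also have "\<dots> = mean\<^sup>2 + excess N"
    using assms by (intro integral_sq_div_total_weight_div_eq) simp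
  finally show ?thesis .
qed

lemma inner_isir_op_tendsto: "(\<lambda>N. \<integral>x. f x * isir_op M p q N f x \<partial>target) \<longlonglongrightarrow> mean\<^sup>2"
proof (rule Lim_transform_eventually)
  show "(\<lambda>N. mean\<^sup>2 + excess N) \<longlonglongrightarrow> mean\<^sup>2"
    using tendsto_add[OF tendsto_const excess_tendsto_0] by simp
  show "\<forall>\<^sub>F N in sequentially. mean\<^sup>2 + excess N = (\<integral>x. f x * isir_op M p q N f x \<partial>target)"
    using inner_isir_op_eq by (intro eventually_sequentiallyI[of 2]) simp
qed

end

theorem proposition6p8:
  fixes M :: "'a measure" and p q f :: "'a \<Rightarrow> real"
  assumes "sigma_finite_measure M"
    and "p \<in> borel_measurable M" and "q \<in> borel_measurable M"
    and "\<And>x. x \<in> space M \<Longrightarrow> p x \<ge> 0"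
    and "\<And>x. x \<in> space M \<Longrightarrow> q x \<ge> 0"
    and "(\<integral>\<^sup>+x. ennreal (p x) \<partial>M) = 1"
    and "(\<integral>\<^sup>+x. ennreal (q x) \<partial>M) = 1"
    and "\<And>x. x \<in> space M \<Longrightarrow> p x > 0 \<Longrightarrow> q x > 0"
    and "f \<in> borel_measurable M"
    and "integrable (density M (\<lambda>x. ennreal (p x))) (\<lambda>x. (f x)\<^sup>2)"
  shows "(\<lambda>N. \<integral>x. f x * isir_op M p q N f x \<partial>(density M (\<lambda>x. ennreal (p x))))
           \<longlonglongrightarrow> (\<integral>x. f x \<partial>(density M (\<lambda>x. ennreal (p x))))\<^sup>2"
proof -
  interpret isir_square_integrable M p q f
    using assms(2-) by unfold_locales auto
  show ?thesis
    using inner_isir_op_tendsto by (simp add: mean_def)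
qed

end
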